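(* Let $(X,d)$ be a compact metric space and $f:X\to X$ a cw-expansive homeomorphism. Then for every $\varepsilon>0$ there exists $\delta>0$ such that for every $x\in X$ whose $\omega$-limit set $\omega(x)$ contains a point at which $X$ is locally connected, either $x$ is a periodic source or $\operatorname{diam} CW^s_\varepsilon(x)\ge\delta$.
   Context: A homeomorphism $f:X\to X$ of a compact metric space is continuum-wise expansive (cw-expansive) if there is a constant $\alpha>0$ such that $\sup_{n\in\mathbb Z}\operatorname{diam} f^n(C)>\alpha$ for every continuum $C\subset X$ containing more than one point. For $\varepsilon>0$ and $x\in X$: $W^s_\varepsilon(x)=\{y\in X:\ d(f^n(x),f^n(y))\le\varepsilon \text{ for all } n\ge 0\}$, $W^u_\varepsilon(x)=\{y\in X:\ d(f^{-n}(x),f^{-n}(y))\le\varepsilon \text{ for all } n\ge 0\}$, $CW^s_\varepsilon(x)$ is the connected component of $W^s_\varepsilon(x)$ containing $x$, and $W^u(x)=\{y:\ d(f^{-n}(x),f^{-n}(y))\to0\}$. A point $x$ is a source if $W^u_\varepsilon(x)$ is a neighborhood of $x$ for every $\varepsilon>0$ and there exists $\varepsilon>0$ with $W^u_\varepsilon(x)\subset W^u(x)$. $\omega(x)$ is the set of limits of sequences $f^{n_k}(x)$ with $n_k\to\infty$. $X$ is locally connected at $z$ if every neighborhood of $z$ contains a connected neighborhood of $z$. *)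

theory Defs
  imports "HOL-Analysis.Analysis"
begin

text \<open>Dynamics of a homeomorphism f of a compact metric space X, with inverse g
  (i.e. homeomorphism X X f g). Integer iterates:\<close>

definition iterz :: "('a \<Rightarrow> 'a) \<Rightarrow> ('a \<Rightarrow> 'a) \<Rightarrow> int \<Rightarrow> 'a \<Rightarrow> 'a" where
  "iterz f g n = (if n \<ge> 0 then f ^^ nat n else g ^^ nat (- n))"

definition cw_expansive :: "'a::metric_space set \<Rightarrow> ('a \<Rightarrow> 'a) \<Rightarrow> ('a \<Rightarrow> 'a) \<Rightarrow> bool" where
  "cw_expansive X f g \<longleftrightarrow> (\<exists>\<alpha>>0. \<forall>C. C \<subseteq> X \<and> compact C \<and> connected C \<and> (\<exists>x\<in>C. \<exists>y\<in>C. x \<noteq> y)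
      \<longrightarrow> (SUP n. ereal (diameter (iterz f g n ` C))) > ereal \<alpha>)"

definition Ws :: "'a::metric_space set \<Rightarrow> ('a \<Rightarrow> 'a) \<Rightarrow> real \<Rightarrow> 'a \<Rightarrow> 'a set" where
  "Ws X f \<epsilon> x = {y \<in> X. \<forall>n::nat. dist ((f ^^ n) x) ((f ^^ n) y) \<le> \<epsilon>}"

definition Wu_eps :: "'a::metric_space set \<Rightarrow> ('a \<Rightarrow> 'a) \<Rightarrow> real \<Rightarrow> 'a \<Rightarrow> 'a set" where
  "Wu_eps X g \<epsilon> x = {y \<in> X. \<forall>n::nat. dist ((g ^^ n) x) ((g ^^ n) y) \<le> \<epsilon>}"

definition CWs :: "'a::metric_space set \<Rightarrow> ('a \<Rightarrow> 'a) \<Rightarrow> real \<Rightarrow> 'a \<Rightarrow> 'a set" where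
  "CWs X f \<epsilon> x = connected_component_set (Ws X f \<epsilon> x) x"

definition Wu :: "'a::metric_space set \<Rightarrow> ('a \<Rightarrow> 'a) \<Rightarrow> 'a \<Rightarrow> 'a set" where
  "Wu X g x = {y \<in> X. (\<lambda>n. dist ((g ^^ n) x) ((g ^^ n) y)) \<longlonglongrightarrow> 0}"

definition nbhd_in :: "'a::metric_space set \<Rightarrow> 'a set \<Rightarrow> 'a \<Rightarrow> bool" where
  "nbhd_in X N x \<longleftrightarrow> (\<exists>U. openin (top_of_set X) U \<and> x \<in> U \<and> U \<subseteq> N)"

definition is_source :: "'a::metric_space set \<Rightarrow> ('a \<Rightarrow> 'a) \<Rightarrow> 'a \<Rightarrow> bool" where
  "is_source X g x \<longleftrightarrow> (\<forall>\<epsilon>>0. nbhd_in X (Wu_eps X g \<epsilon> x) x) \<and> (\<exists>\<epsilon>>0. Wu_eps X g \<epsilon> x \<subseteq> Wu X g x)"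

definition is_periodic :: "('a \<Rightarrow> 'a) \<Rightarrow> 'a \<Rightarrow> bool" where
  "is_periodic f x \<longleftrightarrow> (\<exists>n>0. (f ^^ n) x = x)"

definition omega_limit :: "('a::metric_space \<Rightarrow> 'a) \<Rightarrow> 'a \<Rightarrow> 'a set" where
  "omega_limit f x = {y. \<exists>r. strict_mono r \<and> (\<lambda>k. (f ^^ r k) x) \<longlonglongrightarrow> y}"

definition locally_connected_at :: "'a::metric_space set \<Rightarrow> 'a \<Rightarrow> bool" where
  "locally_connected_at X z \<longleftrightarrow>
     (\<forall>V. nbhd_in X V z \<longrightarrow> (\<exists>N. N \<subseteq> V \<and> N \<subseteq> X \<and> connected N \<and> nbhd_in X N z))"

end

theory Submission
  imports Defs
begin

text \<open>
  Fix \<open>\<epsilon>\<close> and a scale \<open>e \<le> \<epsilon>\<close> small compared with the cw-expansivity constant. By compactness,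
  cw-expansivity becomes uniform: for every \<open>\<gamma> > 0\<close> there is \<open>N\<close> such that every continuum whose
  iterates \<open>f\<^sup>j\<close>, \<open>|j| \<le> N\<close>, stay \<open>2e\<close>-small is \<open>\<gamma>\<close>-small. Let \<open>K\<close> be a small continuum which is a
  neighbourhood of the locally connected point \<open>z \<in> \<omega>(x)\<close>, and look at the returns \<open>f\<^sup>n x \<in> K\<close>.

  If infinitely often the whole of \<open>g\<^sup>n K\<close> \<open>e\<close>-shadows the orbit of \<open>x\<close> up to time \<open>n\<close>, then all
  \<open>g\<^sup>s K\<close> are \<open>2e\<close>-small, hence their diameters tend to \<open>0\<close>. The sets \<open>g\<^sup>n K\<close> are then
  neighbourhoods of \<open>x\<close> contracted by backward iteration, so \<open>x\<close> is a source, and a return time \<open>m\<close>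
  with \<open>g\<^sup>m K \<subseteq> K\<close> forces \<open>g\<^sup>m x = x\<close>.

  Otherwise, by boundary bumping, the component of \<open>x\<close> in \<open>g\<^sup>n K\<close> intersected with the Bowen ball
  \<open>B\<^sub>n(x, e)\<close> reaches its boundary. Uniform cw-expansivity forces this to happen within the first
  \<open>N\<close> iterates, so the component contains a point \<open>\<delta>\<close>-far from \<open>x\<close>, and the upper limit of these
  components is a continuum in \<open>W\<^sup>s\<^sub>\<epsilon>(x)\<close> of diameter at least \<open>\<delta>\<close>.
\<close>

lemma uniformly_continuous_on_finite_family:
  fixes F :: "nat \<Rightarrow> 'a::metric_space \<Rightarrow> 'b::metric_space"
  assumes "compact X" and "\<And>i. i \<le> N \<Longrightarrow> continuous_on X (F i)" and "e > 0"
  obtains d where "d > 0"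
    and "\<And>i u v. i \<le> N \<Longrightarrow> u \<in> X \<Longrightarrow> v \<in> X \<Longrightarrow> dist u v < d \<Longrightarrow> dist (F i u) (F i v) < e"
proof -
  have "\<exists>d>0. \<forall>u\<in>X. \<forall>v\<in>X. dist u v < d \<longrightarrow> dist (F i u) (F i v) < e" if "i \<le> N" for i
    using compact_uniformly_continuous[OF assms(2)[OF that] assms(1)] assms(3)
    unfolding uniformly_continuous_on_def by (metis dist_commute)
  then obtain d where d: "\<And>i. i \<le> N \<Longrightarrow> d i > 0"
    "\<And>i u v. i \<le> N \<Longrightarrow> u \<in> X \<Longrightarrow> v \<in> X \<Longrightarrow> dist u v < d i \<Longrightarrow> dist (F i u) (F i v) < e"
    by metis
  show thesis
  proof
    show "Min (d ` {..N}) > 0" using d(1) by simp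
    show "dist (F i u) (F i v) < e" if "i \<le> N" "u \<in> X" "v \<in> X" "dist u v < Min (d ` {..N})" for i u v
      using that d(2)[of i u v] Min_le[of "d ` {..N}" "d i"] by simp
  qed
qed

lemma diameter_leI:
  fixes S :: "'a::metric_space set"
  assumes "0 \<le> d" and "\<And>x y. x \<in> S \<Longrightarrow> y \<in> S \<Longrightarrow> dist x y \<le> d"
  shows "diameter S \<le> d"
  using assms by (auto simp: diameter_def intro: cSUP_least)

lemma locally_connected_at_continuum:
  fixes X :: "'a::metric_space set"
  assumes "compact X" and "z \<in> X" and "locally_connected_at X z" and "\<rho> > 0"
  obtains K U where "compact K" "connected K" "K \<subseteq> X" "\<And>u v. u \<in> K \<Longrightarrow> v \<in> K \<Longrightarrow> dist u v < \<rho>"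
    and "openin (top_of_set X) U" "z \<in> U" "U \<subseteq> K"
proof -
  have "nbhd_in X (X \<inter> ball z (\<rho> / 3)) z"
    unfolding nbhd_in_def using assms(2,4) by (intro exI[of _ "X \<inter> ball z (\<rho> / 3)"]) auto
  then obtain N where N: "N \<subseteq> X \<inter> ball z (\<rho> / 3)" "connected N" "nbhd_in X N z"
    using assms(3) unfolding locally_connected_at_def by blast
  then obtain U where U: "openin (top_of_set X) U" "z \<in> U" "U \<subseteq> closure N"
    unfolding nbhd_in_def using closure_subset by blast
  have "closure N \<subseteq> X"
    using N(1) compact_imp_closed[OF assms(1)] by (meson closure_minimal le_inf_iff)
  then have "compact (closure N)"
    using compact_Int_closed[OF assms(1) closed_closure, of N] by (simp add: inf.absorb2)
  have "closure N \<subseteq> cball z (\<rho> / 3)"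
    using N(1) by (intro closure_minimal) auto
  then have "dist u v < \<rho>" if "u \<in> closure N" "v \<in> closure N" for u v
  proof -
    have "dist z u \<le> \<rho> / 3" "dist z v \<le> \<rho> / 3"
      using that \<open>closure N \<subseteq> cball z (\<rho> / 3)\<close> by auto
    then show ?thesis using dist_triangle3[of u v z] \<open>\<rho> > 0\<close> by linarith
  qed
  then show thesis
    using that[OF \<open>compact (closure N)\<close> connected_imp_connected_closure[OF N(2)] \<open>closure N \<subseteq> X\<close>] U
    by blast
qed

section \<open>Upper limits of sequences of sets\<close>

definition upper_limit :: "(nat \<Rightarrow> 'a::topological_space set) \<Rightarrow> 'a set" where
  "upper_limit D = (\<Inter>M. closure (\<Union>n\<in>{M..}. D n))"

lemma closed_upper_limit: "closed (upper_limit D)"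
  unfolding upper_limit_def by auto

lemma upper_limit_subset:
  assumes "closed S" and "eventually (\<lambda>n. D n \<subseteq> S) sequentially"
  shows "upper_limit D \<subseteq> S"
proof -
  obtain M where "\<And>n. n \<ge> M \<Longrightarrow> D n \<subseteq> S"
    using assms(2) unfolding eventually_sequentially by blast
  then have "closure (\<Union>n\<in>{M..}. D n) \<subseteq> S"
    using assms(1) by (intro closure_minimal) auto
  then show ?thesis unfolding upper_limit_def by blast
qed

lemma upper_limitI:
  assumes "filterlim t sequentially sequentially" and "\<And>k. c k \<in> D (t k)" and "c \<longlonglongrightarrow> y"
  shows "y \<in> upper_limit D"
  unfolding upper_limit_def
proof
  fix M
  have "eventually (\<lambda>k. t k \<ge> M) sequentially"
    using assms(1) by (simp add: filterlim_at_top)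
  then have "eventually (\<lambda>k. c k \<in> closure (\<Union>n\<in>{M..}. D n)) sequentially"
    by eventually_elim (use assms(2) closure_subset in fastforce)
  then show "y \<in> closure (\<Union>n\<in>{M..}. D n)"
    using Lim_in_closed_set[OF closed_closure _ _ assms(3)] by simp
qed

lemma upper_limit_meets_compact:
  fixes D :: "nat \<Rightarrow> 'a::metric_space set"
  assumes "compact Z" and "\<exists>\<^sub>F n in sequentially. D n \<inter> Z \<noteq> {}"
  shows "upper_limit D \<inter> Z \<noteq> {}"
proof -
  obtain t where t: "\<And>M. t M \<ge> M" "\<And>M. D (t M) \<inter> Z \<noteq> {}"
    using assms(2) unfolding frequently_sequentially by metis
  have "\<forall>M. \<exists>x. x \<in> D (t M) \<inter> Z" using t(2) by blast
  then obtain c where c: "\<And>M. c M \<in> D (t M) \<inter> Z" by metis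
  obtain y \<sigma> where y: "y \<in> Z" "strict_mono \<sigma>" "(c \<circ> \<sigma>) \<longlonglongrightarrow> y"
    using compact_imp_seq_compact[OF assms(1)] c unfolding seq_compact_def by blast
  have "filterlim t sequentially sequentially"
    using t by (intro filterlim_at_top_mono[OF filterlim_ident]) auto
  then have "filterlim (t \<circ> \<sigma>) sequentially sequentially"
    unfolding comp_def using filterlim_compose filterlim_subseq[OF y(2)] by blast
  then have "y \<in> upper_limit D"
    using c y(3) by (intro upper_limitI[of "t \<circ> \<sigma>" "c \<circ> \<sigma>"]) auto
  then show ?thesis using y(1) by blast
qed

lemma connected_continuous_ivt:
  fixes \<phi> :: "'a::topological_space \<Rightarrow> real"
  assumes "connected D" "continuous_on D \<phi>" "a \<in> D" "c \<in> D" "\<phi> a \<le> t" "t \<le> \<phi> c"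
  shows "\<exists>m\<in>D. \<phi> m = t"
proof -
  have "{\<phi> a..\<phi> c} \<subseteq> \<phi> ` D"
    using connected_continuous_image[OF assms(2,1)] assms(3,4) by (intro connected_contains_Icc) auto
  then show ?thesis using assms(5,6) by auto
qed

lemma connected_upper_limit:
  fixes D :: "nat \<Rightarrow> 'a::metric_space set"
  assumes X: "compact X" "\<And>n. D n \<subseteq> X" and conn: "\<And>n. connected (D n)"
    and a: "\<And>n. a n \<in> D n" "a \<longlonglongrightarrow> a0"
  shows "connected (upper_limit D)"
proof -
  have a0: "a0 \<in> upper_limit D"
    using a(1) by (intro upper_limitI[OF filterlim_ident _ a(2)])
  have False if AB: "closed A" "closed B" "A \<inter> B = {}" "A \<union> B = upper_limit D"
    and "a0 \<in> A" "b \<in> B" for A B b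
  proof -
    \<comment> \<open>The \<open>D n\<close> eventually start in \<open>{\<phi> < 0}\<close> near \<open>a0\<close> and reach into \<open>{\<phi> > 0}\<close> near \<open>b\<close>,
      so infinitely many of them meet the compact zero set of \<open>\<phi>\<close>, and so does their upper limit.\<close>
    define \<phi> where "\<phi> y = infdist y A - infdist y B" for y
    have cont: "continuous_on UNIV \<phi>" unfolding \<phi>_def by (intro continuous_intros)
    have neg: "\<phi> y < 0" if "y \<in> A" for y
      using that AB \<open>b \<in> B\<close> infdist_pos_not_in_closed[of B y] unfolding \<phi>_def by auto
    have pos: "\<phi> y > 0" if "y \<in> B" for y
      using that AB \<open>a0 \<in> A\<close> infdist_pos_not_in_closed[of A y] unfolding \<phi>_def by auto
    have "\<exists>\<^sub>F n in sequentially. D n \<inter> (X \<inter> \<phi> -` {0}) \<noteq> {}"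
      unfolding frequently_sequentially
    proof
      fix M
      have "(\<lambda>n. \<phi> (a n)) \<longlonglongrightarrow> \<phi> a0"
        using cont a(2) by (simp add: continuous_on_eq_continuous_at isCont_tendsto_compose)
      then have "eventually (\<lambda>n. \<phi> (a n) < 0) sequentially"
        using order_tendstoD(2) neg[OF \<open>a0 \<in> A\<close>] by blast
      then obtain M1 where M1: "\<And>n. n \<ge> M1 \<Longrightarrow> \<phi> (a n) < 0"
        unfolding eventually_sequentially by blast
      have "b \<in> closure (\<Union>n\<in>{max M M1..}. D n)"
        using \<open>b \<in> B\<close> AB(4) unfolding upper_limit_def by blast
      moreover have "open {y. \<phi> y > 0}"
        using cont by (simp add: continuous_on_eq_continuous_at open_Collect_less)
      ultimately have "{y. \<phi> y > 0} \<inter> (\<Union>n\<in>{max M M1..}. D n) \<noteq> {}"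
        using pos[OF \<open>b \<in> B\<close>] open_Int_closure_eq_empty by blast
      then obtain n c where n: "n \<ge> max M M1" "c \<in> D n" "\<phi> c > 0" by blast
      have "\<exists>m\<in>D n. \<phi> m = 0"
        using M1[of n] n a(1) conn continuous_on_subset[OF cont subset_UNIV]
        by (intro connected_continuous_ivt[of "D n" \<phi> "a n" c]) auto
      then show "\<exists>n\<ge>M. D n \<inter> (X \<inter> \<phi> -` {0}) \<noteq> {}" using n(1) X(2) by fastforce
    qed
    moreover have "compact (X \<inter> \<phi> -` {0})"
      using X(1) cont by (intro compact_Int_closed continuous_closed_vimage)
        (auto simp: continuous_on_eq_continuous_at)
    ultimately have "upper_limit D \<inter> (X \<inter> \<phi> -` {0}) \<noteq> {}"
      by (intro upper_limit_meets_compact)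
    then show False using neg pos AB(4) by fastforce
  qed
  then show ?thesis
    unfolding connected_closed_set[OF closed_upper_limit] using a0 by blast
qed

lemma dist_le_on_upper_limit:
  fixes h :: "'a::metric_space \<Rightarrow> 'b::metric_space"
  assumes "closed X" "continuous_on X h" "\<And>k. D k \<subseteq> X"
    and a: "\<And>k. a k \<in> D k" "a \<longlonglongrightarrow> a0" "a0 \<in> X"
    and close: "eventually (\<lambda>k. \<forall>c\<in>D k. dist (h (a k)) (h c) \<le> r) sequentially"
    and "y \<in> upper_limit D"
  shows "dist (h a0) (h y) \<le> r"
proof (rule field_le_epsilon)
  fix \<rho> :: real assume "\<rho> > 0"
  have "(\<lambda>k. h (a k)) \<longlonglongrightarrow> h a0"
    by (rule continuous_on_tendsto_compose[OF assms(2) a(2,3)])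
      (use a(1) assms(3) in \<open>auto intro!: always_eventually\<close>)
  then have "eventually (\<lambda>k. dist (h (a k)) (h a0) < \<rho>) sequentially"
    using \<open>\<rho> > 0\<close> by (rule tendstoD)
  with close have "eventually (\<lambda>k. D k \<subseteq> X \<inter> h -` cball (h a0) (r + \<rho>)) sequentially"
  proof eventually_elim
    case (elim k)
    have "dist (h a0) (h c) \<le> r + \<rho>" if "c \<in> D k" for c
      using elim that dist_triangle[of "h a0" "h c" "h (a k)"] dist_commute[of "h a0" "h (a k)"]
      by fastforce
    then show ?case using assms(3) by auto
  qed
  then have "upper_limit D \<subseteq> X \<inter> h -` cball (h a0) (r + \<rho>)"
    by (intro upper_limit_subset continuous_closed_preimage assms(1,2) closed_cball)
  then show "dist (h a0) (h y) \<le> r + \<rho>" using \<open>y \<in> upper_limit D\<close> by auto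
qed

section \<open>Iterates of a homeomorphism\<close>

lemma iterz_swap: "iterz f g j = iterz g f (- j)"
  by (auto simp: iterz_def)

lemma homeomorphism_funpow:
  assumes "homeomorphism X X f g"
  shows "homeomorphism X X (f ^^ n) (g ^^ n)"
proof (induction n)
  case 0
  then show ?case using homeomorphism_ident by (simp add: id_def)
next
  case (Suc n)
  have "homeomorphism X X (f \<circ> f ^^ n) (g ^^ n \<circ> g)"
    by (rule homeomorphism_compose[OF Suc assms])
  then show ?case by (metis funpow.simps(2) funpow_Suc_right)
qed

lemma homeomorphism_funpow_diff:
  assumes "homeomorphism X X f g" and "x \<in> X" and "i \<le> n"
  shows "(g ^^ i) ((f ^^ n) x) = (f ^^ (n - i)) x"
proof -
  have "(f ^^ n) x = (f ^^ i) ((f ^^ (n - i)) x)"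
    using assms(3) by (metis funpow_add le_add_diff_inverse comp_apply)
  moreover have "(f ^^ (n - i)) x \<in> X"
    using homeomorphism_image1[OF homeomorphism_funpow[OF assms(1)]] assms(2) by blast
  ultimately show ?thesis
    using homeomorphism_apply1[OF homeomorphism_funpow[OF assms(1)]] by simp
qed

lemma iterz_funpow:
  assumes "homeomorphism X X f g" and "x \<in> X" and "- j \<le> int i"
  shows "iterz f g j ((f ^^ i) x) = (f ^^ nat (int i + j)) x"
proof (cases "j \<ge> 0")
  case True
  then have "nat (int i + j) = nat j + i" by simp
  then show ?thesis using True by (simp add: iterz_def funpow_add)
next
  case False
  then have "iterz f g j ((f ^^ i) x) = (f ^^ (i - nat (- j))) x"
    using homeomorphism_funpow_diff[OF assms(1,2), of "nat (- j)" i] assms(3) by (simp add: iterz_def)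
  moreover have "i - nat (- j) = nat (int i + j)" using False assms(3) by linarith
  ultimately show ?thesis by simp
qed

lemma omega_limit_frequently:
  assumes "z \<in> omega_limit f x" and "eventually P (nhds z)"
  shows "\<exists>\<^sub>F n in sequentially. P ((f ^^ n) x)"
proof -
  obtain r where r: "strict_mono r" "(\<lambda>k. (f ^^ r k) x) \<longlonglongrightarrow> z"
    using assms(1) by (auto simp: omega_limit_def)
  then have "eventually (\<lambda>k. P ((f ^^ r k) x)) sequentially"
    using assms(2) unfolding filterlim_iff by auto
  then obtain K where K: "\<And>k. k \<ge> K \<Longrightarrow> P ((f ^^ r k) x)"
    unfolding eventually_sequentially by blast
  show ?thesis
    unfolding frequently_sequentially
  proof
    fix N
    have "N \<le> r (max N K)" using seq_suble[OF r(1), of "max N K"] by simp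
    then show "\<exists>n\<ge>N. P ((f ^^ n) x)" using K[of "max N K"] by auto
  qed
qed

definition bowen_ball :: "'a::metric_space set \<Rightarrow> ('a \<Rightarrow> 'a) \<Rightarrow> nat \<Rightarrow> real \<Rightarrow> 'a \<Rightarrow> 'a set" where
  "bowen_ball X f n r x = {y \<in> X. \<forall>i\<le>n. dist ((f ^^ i) x) ((f ^^ i) y) \<le> r}"

definition orbit_close :: "('a::metric_space \<Rightarrow> 'a) \<Rightarrow> ('a \<Rightarrow> 'a) \<Rightarrow> nat \<Rightarrow> real \<Rightarrow> 'a set \<Rightarrow> bool" where
  "orbit_close f g N r C \<longleftrightarrow>
     (\<forall>j u v. \<bar>j\<bar> \<le> int N \<longrightarrow> u \<in> C \<longrightarrow> v \<in> C \<longrightarrow> dist (iterz f g j u) (iterz f g j v) \<le> r)"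

definition uniform_cw_scale :: "'a::metric_space set \<Rightarrow> ('a \<Rightarrow> 'a) \<Rightarrow> ('a \<Rightarrow> 'a) \<Rightarrow> real \<Rightarrow> bool" where
  "uniform_cw_scale X f g r \<longleftrightarrow>
     (\<forall>\<gamma>>0. \<exists>N. \<forall>C. C \<subseteq> X \<longrightarrow> connected C \<longrightarrow> orbit_close f g N r C \<longrightarrow> (\<forall>u\<in>C. \<forall>v\<in>C. dist u v < \<gamma>))"

definition iterates_shrink :: "('a::metric_space \<Rightarrow> 'a) \<Rightarrow> 'a set \<Rightarrow> bool" where
  "iterates_shrink g K \<longleftrightarrow> (\<forall>\<gamma>>0. \<exists>M. \<forall>s\<ge>M. \<forall>u\<in>K. \<forall>v\<in>K. dist ((g ^^ s) u) ((g ^^ s) v) < \<gamma>)"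

lemma iterates_shrink_shift:
  assumes "iterates_shrink g K" and "\<gamma> > 0"
  obtains M where
    "\<And>i n u v. M \<le> i + n \<Longrightarrow> u \<in> K \<Longrightarrow> v \<in> K \<Longrightarrow> dist ((g ^^ i) ((g ^^ n) u)) ((g ^^ i) ((g ^^ n) v)) < \<gamma>"
proof -
  obtain M where M: "\<forall>s\<ge>M. \<forall>u\<in>K. \<forall>v\<in>K. dist ((g ^^ s) u) ((g ^^ s) v) < \<gamma>"
    using assms unfolding iterates_shrink_def by blast
  show thesis
  proof (rule that)
    fix i n u v assume "M \<le> i + n" "u \<in> K" "v \<in> K"
    then show "dist ((g ^^ i) ((g ^^ n) u)) ((g ^^ i) ((g ^^ n) v)) < \<gamma>"
      using M[rule_format, of "i + n" u v] by (simp add: funpow_add)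
  qed
qed

locale compact_dynamics =
  fixes X :: "'a::metric_space set" and f g :: "'a \<Rightarrow> 'a"
  assumes compact_X: "compact X" and homeomorphism: "homeomorphism X X f g"
begin

lemma homeomorphism_inverse: "homeomorphism X X g f"
  using homeomorphism by (rule homeomorphism_symD)

lemma funpow_in [simp]: "x \<in> X \<Longrightarrow> (f ^^ n) x \<in> X" "x \<in> X \<Longrightarrow> (g ^^ n) x \<in> X"
  using homeomorphism_image1[OF homeomorphism_funpow[OF homeomorphism]]
    homeomorphism_image2[OF homeomorphism_funpow[OF homeomorphism]] by blast+

lemma funpow_inv_cancel [simp]:
  "x \<in> X \<Longrightarrow> (g ^^ n) ((f ^^ n) x) = x" "x \<in> X \<Longrightarrow> (f ^^ n) ((g ^^ n) x) = x"
  using homeomorphism_apply1[OF homeomorphism_funpow[OF homeomorphism]]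
    homeomorphism_apply2[OF homeomorphism_funpow[OF homeomorphism]] by blast+

lemma continuous_on_funpow: "continuous_on X (f ^^ n)" "continuous_on X (g ^^ n)"
  using homeomorphism_funpow[OF homeomorphism] by (auto dest: homeomorphism_cont1 homeomorphism_cont2)

lemma continuous_on_iterz: "continuous_on X (iterz f g j)"
  by (simp add: iterz_def continuous_on_funpow)

lemma omega_limit_subset:
  assumes "x \<in> X"
  shows "omega_limit f x \<subseteq> X"
proof
  fix z assume "z \<in> omega_limit f x"
  then obtain r where "(\<lambda>k. (f ^^ r k) x) \<longlonglongrightarrow> z" by (auto simp: omega_limit_def)
  then show "z \<in> X"
    using assms by (intro Lim_in_closed_set[OF compact_imp_closed[OF compact_X]]) auto
qed

lemma omega_limit_returns:
  assumes "z \<in> omega_limit f x" "x \<in> X" "openin (top_of_set X) U" "z \<in> U"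
  shows "\<exists>\<^sub>F n in sequentially. (f ^^ n) x \<in> U"
proof -
  obtain \<rho> where "\<rho> > 0" "ball z \<rho> \<inter> X \<subseteq> U"
    using assms(3,4) unfolding openin_contains_ball by blast
  have "\<exists>\<^sub>F n in sequentially. (f ^^ n) x \<in> ball z \<rho>"
    using \<open>\<rho> > 0\<close> by (intro omega_limit_frequently[OF assms(1)] eventually_nhds_in_open) auto
  then show ?thesis
    by (rule frequently_elim1) (use \<open>ball z \<rho> \<inter> X \<subseteq> U\<close> assms(2) in auto)
qed

section \<open>Uniform cw-expansivity\<close>

lemma orbit_close_limit_continuum:
  assumes C: "\<And>N. C N \<subseteq> X" "\<And>N. connected (C N)" "\<And>N. orbit_close f g N r (C N)"
    and uv: "\<And>N. u N \<in> C N" "\<And>N. v N \<in> C N" "\<And>N. \<gamma> \<le> dist (u N) (v N)" and "\<gamma> > 0"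
  obtains L where "L \<subseteq> X" "compact L" "connected L" "\<exists>a\<in>L. \<exists>b\<in>L. a \<noteq> b"
    "\<And>j. diameter (iterz f g j ` L) \<le> 2 * r"
proof -
  have "\<forall>N. (u N, v N) \<in> X \<times> X" using uv(1,2) C(1) by blast
  then obtain l \<sigma> where \<sigma>: "l \<in> X \<times> X" "strict_mono \<sigma>" "((\<lambda>N. (u N, v N)) \<circ> \<sigma>) \<longlonglongrightarrow> l"
    by (rule seq_compactE[OF compact_imp_seq_compact[OF compact_Times[OF compact_X compact_X]]])
  define a b where "a = fst l" and "b = snd l"
  have ua: "(\<lambda>k. u (\<sigma> k)) \<longlonglongrightarrow> a" and vb: "(\<lambda>k. v (\<sigma> k)) \<longlonglongrightarrow> b"
    using tendsto_fst[OF \<sigma>(3)] tendsto_snd[OF \<sigma>(3)] by (simp_all add: a_def b_def o_def)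
  have aX: "a \<in> X" using \<sigma>(1) by (auto simp: a_def)
  define L where "L = upper_limit (C \<circ> \<sigma>)"
  have LX: "L \<subseteq> X"
    unfolding L_def using C(1) compact_imp_closed[OF compact_X] by (intro upper_limit_subset) auto
  have "compact L"
    using compact_Int_closed[OF compact_X closed_upper_limit, of "C \<circ> \<sigma>"] LX
    by (simp add: L_def Int_absorb1 inf.absorb2)
  have "connected L"
    unfolding L_def using C uv(1) by (intro connected_upper_limit[OF compact_X _ _ _ ua]) auto
  have aL: "a \<in> L" and bL: "b \<in> L"
    unfolding L_def using uv(1,2)
    by (auto intro: upper_limitI[OF filterlim_ident _ ua] upper_limitI[OF filterlim_ident _ vb])
  have "\<gamma> \<le> dist a b"
    by (rule LIMSEQ_le_const[OF tendsto_dist[OF ua vb]]) (use uv(3) in blast)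
  then have "a \<noteq> b" using \<open>\<gamma> > 0\<close> by auto
  have near: "dist (iterz f g j a) (iterz f g j y) \<le> r" if "y \<in> L" for j y
  proof (rule dist_le_on_upper_limit[OF compact_imp_closed[OF compact_X] continuous_on_iterz])
    have "\<forall>c\<in>C (\<sigma> k). dist (iterz f g j (u (\<sigma> k))) (iterz f g j c) \<le> r" if "nat \<bar>j\<bar> \<le> k" for k
      using C(3)[of "\<sigma> k"] uv(1)[of "\<sigma> k"] seq_suble[OF \<sigma>(2), of k] that
      unfolding orbit_close_def by (meson le_trans nat_le_iff)
    then show "eventually (\<lambda>k. \<forall>c\<in>(C \<circ> \<sigma>) k. dist (iterz f g j (u (\<sigma> k))) (iterz f g j c) \<le> r)
        sequentially"
      unfolding eventually_sequentially by auto
  qed (use C(1) uv(1) ua aX \<open>y \<in> L\<close> in \<open>auto simp: L_def comp_def\<close>)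
  have "diameter (iterz f g j ` L) \<le> 2 * r" for j
  proof (rule diameter_leI)
    show "0 \<le> 2 * r" using near[OF aL, of 0] by simp
    fix p q assume "p \<in> iterz f g j ` L" "q \<in> iterz f g j ` L"
    then obtain y z where "y \<in> L" "z \<in> L" "p = iterz f g j y" "q = iterz f g j z" by blast
    then show "dist p q \<le> 2 * r"
      using near[of y j] near[of z j] dist_triangle3[of p q "iterz f g j a"] by simp
  qed
  then show thesis
    using that[OF LX \<open>compact L\<close> \<open>connected L\<close>] aL bL \<open>a \<noteq> b\<close> by blast
qed

lemma cw_expansive_imp_uniform_cw_scale:
  assumes "cw_expansive X f g"
  obtains r0 where "r0 > 0" and "\<And>r. r \<le> r0 \<Longrightarrow> uniform_cw_scale X f g r"
proof -
  obtain c where "c > 0" and cw: "\<And>C. C \<subseteq> X \<and> compact C \<and> connected C \<and> (\<exists>x\<in>C. \<exists>y\<in>C. x \<noteq> y)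
      \<Longrightarrow> ereal c < (SUP n. ereal (diameter (iterz f g n ` C)))"
    using assms unfolding cw_expansive_def by blast
  have scale: "uniform_cw_scale X f g r" if "r \<le> c / 2" for r
  proof (rule ccontr)
    assume "\<not> ?thesis"
    then obtain \<gamma> where "\<gamma> > 0" and
      "\<forall>N. \<exists>C. C \<subseteq> X \<and> connected C \<and> orbit_close f g N r C \<and> (\<exists>u\<in>C. \<exists>v\<in>C. \<gamma> \<le> dist u v)"
      unfolding uniform_cw_scale_def by (auto simp: not_less)
    then have "\<forall>N. \<exists>C u v. C \<subseteq> X \<and> connected C \<and> orbit_close f g N r C \<and> u \<in> C \<and> v \<in> C \<and> \<gamma> \<le> dist u v"
      by blast
    then obtain C u v where C: "\<And>N. C N \<subseteq> X" "\<And>N. connected (C N)" "\<And>N. orbit_close f g N r (C N)"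
      and uv: "\<And>N. u N \<in> C N" "\<And>N. v N \<in> C N" "\<And>N. \<gamma> \<le> dist (u N) (v N)"
      by metis
    obtain L where L: "L \<subseteq> X" "compact L" "connected L" "\<exists>a\<in>L. \<exists>b\<in>L. a \<noteq> b"
      and diam: "\<And>j. diameter (iterz f g j ` L) \<le> 2 * r"
      by (rule orbit_close_limit_continuum[OF C uv \<open>\<gamma> > 0\<close>]) blast
    have "(SUP n. ereal (diameter (iterz f g n ` L))) \<le> ereal c"
    proof (rule SUP_least)
      show "ereal (diameter (iterz f g n ` L)) \<le> ereal c" for n
        using diam[of n] that by simp
    qed
    moreover have "ereal c < (SUP n. ereal (diameter (iterz f g n ` L)))"
      using L by (intro cw) blast
    ultimately show False by (meson leD)
  qed
  show thesis by (rule that[of "c / 2"]) (use \<open>c > 0\<close> scale in auto)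
qed

section \<open>Bowen balls and local stable continua\<close>

lemma closed_bowen_ball: "closed (bowen_ball X f n r x)"
proof -
  have "bowen_ball X f n r x = (\<Inter>i\<in>{..n}. X \<inter> (f ^^ i) -` cball ((f ^^ i) x) r)"
    by (auto simp: bowen_ball_def)
  then show ?thesis
    by (simp only:) (intro closed_INT ballI continuous_closed_preimage continuous_on_funpow
        compact_imp_closed[OF compact_X] closed_cball)
qed

lemma bowen_ball_mono: "r \<le> r' \<Longrightarrow> bowen_ball X f n r x \<subseteq> bowen_ball X f n r' x"
  by (auto simp: bowen_ball_def)

lemma bowen_ball_strict_in_interior:
  assumes "A \<subseteq> X" "w \<in> A" and strict: "\<forall>i\<le>n. dist ((f ^^ i) x) ((f ^^ i) w) < r"
  shows "w \<in> (top_of_set A) interior_of (A \<inter> bowen_ball X f n r x)"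
proof -
  define T where "T = (\<Inter>i\<in>{..n}. X \<inter> (f ^^ i) -` ball ((f ^^ i) x) r)"
  have "openin (top_of_set X) T"
    unfolding T_def by (intro openin_INT2 continuous_openin_preimage_gen continuous_on_funpow) auto
  then obtain U where "open U" "T = X \<inter> U" unfolding openin_open by blast
  then have "openin (top_of_set A) (A \<inter> U)" by (simp add: openin_open_Int)
  moreover have "w \<in> A \<inter> U" using assms \<open>T = X \<inter> U\<close> by (auto simp: T_def)
  moreover have "A \<inter> U \<subseteq> A \<inter> bowen_ball X f n r x"
  proof
    fix y assume y: "y \<in> A \<inter> U"
    then have "y \<in> T" using assms(1) \<open>T = X \<inter> U\<close> by blast
    then have "\<forall>i\<le>n. dist ((f ^^ i) x) ((f ^^ i) y) < r" unfolding T_def by auto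
    then show "y \<in> A \<inter> bowen_ball X f n r x"
      using y assms(1) by (auto simp: bowen_ball_def less_imp_le)
  qed
  ultimately show ?thesis unfolding interior_of_def by blast
qed

lemma boundary_bump_bowen_ball:
  assumes A: "compact A" "connected A" "A \<subseteq> X" "x \<in> A" and "0 \<le> r"
    and not_sub: "\<not> A \<subseteq> bowen_ball X f n r x"
  shows "\<exists>w \<in> connected_component_set (A \<inter> bowen_ball X f n r x) x.
           \<exists>i\<le>n. r \<le> dist ((f ^^ i) x) ((f ^^ i) w)"
proof -
  define S where "S = A \<inter> bowen_ball X f n r x"
  have xS: "x \<in> S" using A \<open>0 \<le> r\<close> by (auto simp: S_def bowen_ball_def)
  define C where "C = connected_component_of_set (top_of_set S) x"
  have sub: "subtopology (top_of_set A) S = top_of_set S"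
    by (simp add: S_def subtopology_subtopology inf_absorb2)
  have "C \<inter> (top_of_set A) frontier_of S \<noteq> {}"
  proof (rule boundary_bumping_theorem_closed)
    show "connected_space (top_of_set A)" using A(2) by (simp add: connected_space_subtopology)
    show "compact_space (top_of_set A)" using A(1) by (simp add: compact_space_subtopology)
    show "Hausdorff_space (top_of_set A)" by (simp add: Hausdorff_space_subtopology)
    show "closedin (top_of_set A) S"
      unfolding S_def by (intro closedin_closed_Int closed_bowen_ball)
    show "S \<noteq> topspace (top_of_set A)" using not_sub by (auto simp: S_def)
    show "C \<in> connected_components_of (subtopology (top_of_set A) S)"
      unfolding sub C_def using xS by (simp add: connected_component_in_connected_components_of)
  qed
  then obtain w where wC: "w \<in> C" and wF: "w \<in> (top_of_set A) frontier_of S" by blast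
  have "connected C" and CS: "C \<subseteq> S"
    using connectedin_connected_component_of[of "top_of_set S" x] unfolding C_def
    by (auto simp: connectedin_subtopology)
  then have comp: "C \<subseteq> connected_component_set S x"
    using xS by (intro connected_component_maximal) (auto simp: C_def connected_component_of_refl)
  have "\<exists>i\<le>n. r \<le> dist ((f ^^ i) x) ((f ^^ i) w)"
  proof (rule ccontr)
    assume "\<not> ?thesis"
    then have "\<forall>i\<le>n. dist ((f ^^ i) x) ((f ^^ i) w) < r" by (meson not_le)
    moreover have "w \<in> A" using wC CS by (auto simp: S_def)
    ultimately have "w \<in> (top_of_set A) interior_of S"
      unfolding S_def using bowen_ball_strict_in_interior[OF A(3)] by blast
    then show False using wF by (simp add: frontier_of_def)
  qed
  with wC comp show ?thesis unfolding S_def by blast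
qed

lemma orbit_close_image_bowen_ball:
  assumes C: "C \<subseteq> bowen_ball X f n r x" and "N \<le> i" and "i + N \<le> n"
  shows "orbit_close f g N (2 * r) ((f ^^ i) ` C)"
  unfolding orbit_close_def
proof (intro allI impI)
  fix j p q assume j: "\<bar>j\<bar> \<le> int N" and "p \<in> (f ^^ i) ` C" "q \<in> (f ^^ i) ` C"
  then obtain u v where uv: "u \<in> C" "v \<in> C" "p = (f ^^ i) u" "q = (f ^^ i) v" by blast
  define k where "k = nat (int i + j)"
  have "k \<le> n" and "- j \<le> int i" using j assms(2,3) by (auto simp: k_def)
  then have "iterz f g j p = (f ^^ k) u" "iterz f g j q = (f ^^ k) v"
    using iterz_funpow[OF homeomorphism] uv C by (auto simp: k_def bowen_ball_def)
  moreover have "dist ((f ^^ k) x) ((f ^^ k) u) \<le> r" "dist ((f ^^ k) x) ((f ^^ k) v) \<le> r"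
    using uv C \<open>k \<le> n\<close> by (auto simp: bowen_ball_def)
  ultimately show "dist (iterz f g j p) (iterz f g j q) \<le> 2 * r"
    using dist_triangle3[of "(f ^^ k) u" "(f ^^ k) v" "(f ^^ k) x"] by simp
qed

lemma bowen_component_far:
  assumes N: "\<forall>C. C \<subseteq> X \<longrightarrow> connected C \<longrightarrow> orbit_close f g N (2 * e) C \<longrightarrow> (\<forall>u\<in>C. \<forall>v\<in>C. dist u v < e)"
    and \<delta>: "\<And>i u v. i \<le> N \<Longrightarrow> u \<in> X \<Longrightarrow> v \<in> X \<Longrightarrow> dist u v < \<delta> \<Longrightarrow> dist ((f ^^ i) u) ((f ^^ i) v) < e"
    and K: "K \<subseteq> X" "\<And>j u v. j \<le> N \<Longrightarrow> u \<in> K \<Longrightarrow> v \<in> K \<Longrightarrow> dist ((g ^^ j) u) ((g ^^ j) v) < e"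
    and x: "x \<in> X" "(f ^^ n) x \<in> K"
    and C: "connected C" "x \<in> C" "C \<subseteq> (g ^^ n) ` K \<inter> bowen_ball X f n e x"
    and w: "w \<in> C" "i \<le> n" "e \<le> dist ((f ^^ i) x) ((f ^^ i) w)"
  shows "\<delta> \<le> dist x w"
proof -
  have CX: "C \<subseteq> X" using C(3) by (auto simp: bowen_ball_def)
  \<comment> \<open>Only an early \<open>i\<close> is possible: a late one is excluded by the smallness of \<open>g\<^sup>j K\<close>, and one
    in the middle by uniform cw-expansivity applied to \<open>f\<^sup>i C\<close>.\<close>
  consider (early) "i \<le> N" | (late) "n \<le> i + N" | (middle) "N \<le> i" "i + N \<le> n" by linarith
  then show ?thesis
  proof cases
    case early
    then show ?thesis using \<delta>[OF early x(1), of w] w(1,3) CX by (meson leD not_le subsetD)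
  next
    case late
    obtain u where "u \<in> K" "w = (g ^^ n) u" using w(1) C(3) by blast
    then have "(f ^^ i) w = (g ^^ (n - i)) u"
      using homeomorphism_funpow_diff[OF homeomorphism_inverse] K(1) w(2) by auto
    moreover have "(f ^^ i) x = (g ^^ (n - i)) ((f ^^ n) x)"
      using homeomorphism_funpow_diff[OF homeomorphism_inverse, of "(f ^^ n) x" i n] x(1) w(2) by simp
    moreover have "dist ((g ^^ (n - i)) ((f ^^ n) x)) ((g ^^ (n - i)) u) < e"
      using K(2) late x(2) \<open>u \<in> K\<close> by simp
    ultimately show ?thesis using w(3) by simp
  next
    case middle
    have "(f ^^ i) ` C \<subseteq> X" using CX by auto
    moreover have "connected ((f ^^ i) ` C)"
      using connected_continuous_image[OF continuous_on_subset[OF continuous_on_funpow(1) CX] C(1)] .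
    moreover have "orbit_close f g N (2 * e) ((f ^^ i) ` C)"
      using C(3) middle by (intro orbit_close_image_bowen_ball) auto
    ultimately have "dist ((f ^^ i) x) ((f ^^ i) w) < e" using N C(2) w(1) by blast
    then show ?thesis using w(3) by simp
  qed
qed

lemma upper_limit_bowen_balls_subset_Ws:
  assumes "\<And>M. D M \<subseteq> bowen_ball X f (t M) r x" and "\<And>M. M \<le> t M"
  shows "upper_limit D \<subseteq> Ws X f r x"
proof -
  have "upper_limit D \<subseteq> X \<inter> (f ^^ i) -` cball ((f ^^ i) x) r" for i
  proof (rule upper_limit_subset)
    show "closed (X \<inter> (f ^^ i) -` cball ((f ^^ i) x) r)"
      by (intro continuous_closed_preimage continuous_on_funpow compact_imp_closed[OF compact_X] closed_cball)
    show "eventually (\<lambda>M. D M \<subseteq> X \<inter> (f ^^ i) -` cball ((f ^^ i) x) r) sequentially"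
      using eventually_ge_at_top[of i]
    proof eventually_elim
      case (elim M)
      then show ?case using assms[of M] by (auto simp: bowen_ball_def)
    qed
  qed
  then show ?thesis by (fastforce simp: Ws_def subset_iff)
qed

lemma dist_le_diameter_CWs:
  assumes "connected L" "L \<subseteq> Ws X f r x" "x \<in> L" "y \<in> L"
  shows "dist x y \<le> diameter (CWs X f r x)"
proof (rule diameter_bounded_bound)
  show "bounded (CWs X f r x)"
    unfolding CWs_def Ws_def
    by (rule bounded_subset[OF compact_imp_bounded[OF compact_X]]) (use connected_component_subset in blast)
  have "L \<subseteq> CWs X f r x"
    unfolding CWs_def by (rule connected_component_maximal[OF assms(3,1,2)])
  then show "x \<in> CWs X f r x" "y \<in> CWs X f r x" using assms(3,4) by auto
qed

lemma diameter_CWs_ge: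
  assumes "\<exists>\<^sub>F n in sequentially. \<exists>D. connected D \<and> x \<in> D \<and> D \<subseteq> bowen_ball X f n r x \<and> (\<exists>w\<in>D. \<delta> \<le> dist x w)"
  shows "\<delta> \<le> diameter (CWs X f r x)"
proof -
  have "\<forall>M. \<exists>n D w. M \<le> n \<and> connected D \<and> x \<in> D \<and> D \<subseteq> bowen_ball X f n r x \<and> w \<in> D \<and> \<delta> \<le> dist x w"
    using assms unfolding frequently_sequentially by metis
  then obtain t D w where t: "\<And>M. M \<le> t M"
    and D: "\<And>M. connected (D M)" "\<And>M. x \<in> D M" "\<And>M. D M \<subseteq> bowen_ball X f (t M) r x"
    and w: "\<And>M. w M \<in> D M" "\<And>M. \<delta> \<le> dist x (w M)"
    by metis
  have DX: "\<And>M. D M \<subseteq> X" using D(3) by (auto simp: bowen_ball_def)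
  have "\<forall>M. w M \<in> X" using w(1) DX by blast
  then obtain b \<sigma> where "strict_mono \<sigma>" "(w \<circ> \<sigma>) \<longlonglongrightarrow> b"
    by (rule seq_compactE[OF compact_imp_seq_compact[OF compact_X]])
  have "b \<in> upper_limit D"
    using w(1) by (intro upper_limitI[OF filterlim_subseq[OF \<open>strict_mono \<sigma>\<close>] _ \<open>(w \<circ> \<sigma>) \<longlonglongrightarrow> b\<close>]) auto
  moreover have "x \<in> upper_limit D"
    using D(2) by (intro upper_limitI[OF filterlim_ident _ tendsto_const])
  moreover have "connected (upper_limit D)"
    using connected_upper_limit[OF compact_X DX D(1) D(2) tendsto_const] .
  ultimately have "dist x b \<le> diameter (CWs X f r x)"
    using upper_limit_bowen_balls_subset_Ws[OF D(3) t] by (intro dist_le_diameter_CWs)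
  moreover have "\<delta> \<le> dist x b"
    by (rule LIMSEQ_le_const[OF tendsto_dist[OF tendsto_const \<open>(w \<circ> \<sigma>) \<longlonglongrightarrow> b\<close>]]) (use w(2) in auto)
  ultimately show ?thesis by linarith
qed

lemma diameter_CWs_ge_if_escaping:
  assumes N: "\<forall>C. C \<subseteq> X \<longrightarrow> connected C \<longrightarrow> orbit_close f g N (2 * e) C \<longrightarrow> (\<forall>u\<in>C. \<forall>v\<in>C. dist u v < e)"
    and \<delta>: "\<And>i u v. i \<le> N \<Longrightarrow> u \<in> X \<Longrightarrow> v \<in> X \<Longrightarrow> dist u v < \<delta> \<Longrightarrow> dist ((f ^^ i) u) ((f ^^ i) v) < e"
    and K: "compact K" "connected K" "K \<subseteq> X"
      "\<And>j u v. j \<le> N \<Longrightarrow> u \<in> K \<Longrightarrow> v \<in> K \<Longrightarrow> dist ((g ^^ j) u) ((g ^^ j) v) < e"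
    and "x \<in> X" "0 < e" "e \<le> \<epsilon>"
    and escaping: "\<exists>\<^sub>F n in sequentially. (f ^^ n) x \<in> K \<and> \<not> (g ^^ n) ` K \<subseteq> bowen_ball X f n e x"
  shows "\<delta> \<le> diameter (CWs X f \<epsilon> x)"
proof (rule diameter_CWs_ge)
  show "\<exists>\<^sub>F n in sequentially. \<exists>D. connected D \<and> x \<in> D \<and> D \<subseteq> bowen_ball X f n \<epsilon> x \<and> (\<exists>w\<in>D. \<delta> \<le> dist x w)"
    using escaping
  proof (rule frequently_elim1, elim conjE)
    fix n assume n: "(f ^^ n) x \<in> K" "\<not> (g ^^ n) ` K \<subseteq> bowen_ball X f n e x"
    define A where "A = (g ^^ n) ` K"
    define D where "D = connected_component_set (A \<inter> bowen_ball X f n e x) x"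
    have "compact A" "connected A"
      unfolding A_def using continuous_on_subset[OF continuous_on_funpow(2) K(3)] K(1,2)
      by (auto intro: compact_continuous_image connected_continuous_image)
    moreover have "A \<subseteq> X" "x \<in> A"
      unfolding A_def using K(3) \<open>x \<in> X\<close> n(1) by (auto intro: image_eqI[of x _ "(f ^^ n) x"])
    ultimately obtain w i where w: "w \<in> D" "i \<le> n" "e \<le> dist ((f ^^ i) x) ((f ^^ i) w)"
      using boundary_bump_bowen_ball[of A x e n] n(2) \<open>0 < e\<close> unfolding A_def D_def by auto
    have "x \<in> D"
      unfolding D_def using \<open>x \<in> A\<close> \<open>x \<in> X\<close> \<open>0 < e\<close> by (simp add: bowen_ball_def)
    have D_sub: "D \<subseteq> A \<inter> bowen_ball X f n e x"
      unfolding D_def by (rule connected_component_subset)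
    have "\<delta> \<le> dist x w"
      using D_sub unfolding A_def
      by (intro bowen_component_far[OF N \<delta> K(3,4) \<open>x \<in> X\<close> n(1) _ \<open>x \<in> D\<close> _ w])
        (simp_all add: D_def)
    moreover have "D \<subseteq> bowen_ball X f n \<epsilon> x"
      using D_sub bowen_ball_mono[OF \<open>e \<le> \<epsilon>\<close>] by blast
    moreover have "connected D" unfolding D_def by simp
    ultimately show "\<exists>D. connected D \<and> x \<in> D \<and> D \<subseteq> bowen_ball X f n \<epsilon> x \<and> (\<exists>w\<in>D. \<delta> \<le> dist x w)"
      using \<open>x \<in> D\<close> w(1) by blast
  qed
qed

section \<open>Periodic sources\<close>

lemma backward_dist_le_if_shadowed:
  assumes "\<exists>\<^sub>F n in sequentially. (g ^^ n) ` K \<subseteq> bowen_ball X f n r x" and "K \<subseteq> X" "u \<in> K" "v \<in> K"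
  shows "dist ((g ^^ s) u) ((g ^^ s) v) \<le> 2 * r"
proof -
  obtain n where "n \<ge> s" and n: "(g ^^ n) ` K \<subseteq> bowen_ball X f n r x"
    using assms(1) unfolding frequently_sequentially by blast
  have "(f ^^ (n - s)) ((g ^^ n) y) = (g ^^ s) y" if "y \<in> K" for y
    using homeomorphism_funpow_diff[OF homeomorphism_inverse, of y "n - s" n] that assms(2) \<open>n \<ge> s\<close>
    by auto
  moreover have "dist ((f ^^ (n - s)) x) ((f ^^ (n - s)) ((g ^^ n) y)) \<le> r" if "y \<in> K" for y
    using n that by (auto simp: bowen_ball_def)
  ultimately have "dist ((f ^^ (n - s)) x) ((g ^^ s) u) \<le> r" "dist ((f ^^ (n - s)) x) ((g ^^ s) v) \<le> r"
    using assms(3,4) by metis+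
  then show ?thesis
    using dist_triangle3[of "(g ^^ s) u" "(g ^^ s) v" "(f ^^ (n - s)) x"] by linarith
qed

lemma iterates_shrink_if_bounded:
  assumes scale: "uniform_cw_scale X f g r" and K: "K \<subseteq> X" "connected K"
    and bounded: "\<And>s u v. u \<in> K \<Longrightarrow> v \<in> K \<Longrightarrow> dist ((g ^^ s) u) ((g ^^ s) v) \<le> r"
  shows "iterates_shrink g K"
  unfolding iterates_shrink_def
proof (intro allI impI)
  fix \<gamma> :: real assume "\<gamma> > 0"
  then obtain N where N: "\<And>C. C \<subseteq> X \<Longrightarrow> connected C \<Longrightarrow> orbit_close f g N r C \<Longrightarrow> \<forall>u\<in>C. \<forall>v\<in>C. dist u v < \<gamma>"
    using scale unfolding uniform_cw_scale_def by blast
  have "\<forall>u\<in>(g ^^ s) ` K. \<forall>v\<in>(g ^^ s) ` K. dist u v < \<gamma>" if "s \<ge> N" for s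
  proof (rule N)
    show "(g ^^ s) ` K \<subseteq> X" using K(1) by auto
    show "connected ((g ^^ s) ` K)"
      using connected_continuous_image[OF continuous_on_subset[OF continuous_on_funpow(2) K(1)] K(2)] .
    have "iterz f g j ((g ^^ s) u) = (g ^^ nat (int s - j)) u" if "u \<in> K" "\<bar>j\<bar> \<le> int N" for j u
      using iterz_funpow[OF homeomorphism_inverse, of u "- j" s] that K(1) \<open>s \<ge> N\<close>
      by (auto simp: iterz_swap[of f g j])
    then show "orbit_close f g N r ((g ^^ s) ` K)"
      unfolding orbit_close_def using bounded by auto
  qed
  then show "\<exists>M. \<forall>s\<ge>M. \<forall>u\<in>K. \<forall>v\<in>K. dist ((g ^^ s) u) ((g ^^ s) v) < \<gamma>" by blast
qed

lemma funpow_image_subset_Wu_eps: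
  assumes "iterates_shrink g K" "K \<subseteq> X" "\<gamma> > 0"
  obtains M where "\<And>n y. M \<le> n \<Longrightarrow> y \<in> (g ^^ n) ` K \<Longrightarrow> (g ^^ n) ` K \<subseteq> Wu_eps X g \<gamma> y"
proof -
  obtain M where M: "\<And>i n u v. M \<le> i + n \<Longrightarrow> u \<in> K \<Longrightarrow> v \<in> K \<Longrightarrow>
      dist ((g ^^ i) ((g ^^ n) u)) ((g ^^ i) ((g ^^ n) v)) < \<gamma>"
    by (rule iterates_shrink_shift[OF assms(1,3)]) blast
  show thesis
  proof (rule that)
    fix n y assume "M \<le> n" "y \<in> (g ^^ n) ` K"
    then obtain a where a: "a \<in> K" "y = (g ^^ n) a" by blast
    show "(g ^^ n) ` K \<subseteq> Wu_eps X g \<gamma> y"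
    proof
      fix v assume "v \<in> (g ^^ n) ` K"
      then obtain b where b: "b \<in> K" "v = (g ^^ n) b" by blast
      have "dist ((g ^^ i) y) ((g ^^ i) v) \<le> \<gamma>" for i
        using M[of i n a b] \<open>M \<le> n\<close> a b by simp
      moreover have "v \<in> X" using b assms(2) by auto
      ultimately show "v \<in> Wu_eps X g \<gamma> y" by (simp add: Wu_eps_def)
    qed
  qed
qed

lemma funpow_image_subset_Wu:
  assumes "iterates_shrink g K" "K \<subseteq> X" "y \<in> (g ^^ n) ` K"
  shows "(g ^^ n) ` K \<subseteq> Wu X g y"
proof
  fix v assume v: "v \<in> (g ^^ n) ` K"
  have "(\<lambda>i. dist ((g ^^ i) y) ((g ^^ i) v)) \<longlonglongrightarrow> 0"
  proof (rule LIMSEQ_I)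
    fix \<gamma> :: real assume "\<gamma> > 0"
    obtain M where M: "\<And>i n u v. M \<le> i + n \<Longrightarrow> u \<in> K \<Longrightarrow> v \<in> K \<Longrightarrow>
        dist ((g ^^ i) ((g ^^ n) u)) ((g ^^ i) ((g ^^ n) v)) < \<gamma>"
      by (rule iterates_shrink_shift[OF assms(1) \<open>\<gamma> > 0\<close>]) blast
    obtain a b where "a \<in> K" "y = (g ^^ n) a" "b \<in> K" "v = (g ^^ n) b" using assms(3) v by blast
    then have "norm (dist ((g ^^ i) y) ((g ^^ i) v) - 0) < \<gamma>" if "i \<ge> M" for i
      using M[of i n a b] that by simp
    then show "\<exists>N. \<forall>i\<ge>N. norm (dist ((g ^^ i) y) ((g ^^ i) v) - 0) < \<gamma>" by blast
  qed
  then show "v \<in> Wu X g y" using v assms(2) by (auto simp: Wu_def)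
qed

lemma nbhd_in_funpow_image:
  assumes "openin (top_of_set X) U" "U \<subseteq> K" "x \<in> X" "(f ^^ n) x \<in> U"
  shows "nbhd_in X ((g ^^ n) ` K) x"
  unfolding nbhd_in_def
proof (intro exI conjI)
  show "openin (top_of_set X) (X \<inter> (f ^^ n) -` U)"
    by (rule continuous_openin_preimage[OF continuous_on_funpow(1) _ assms(1)]) auto
  show "x \<in> X \<inter> (f ^^ n) -` U" using assms(3,4) by simp
  show "X \<inter> (f ^^ n) -` U \<subseteq> (g ^^ n) ` K"
  proof
    fix v assume "v \<in> X \<inter> (f ^^ n) -` U"
    then have "v = (g ^^ n) ((f ^^ n) v)" "(f ^^ n) v \<in> K" using assms(2) by auto
    then show "v \<in> (g ^^ n) ` K" by blast
  qed
qed

lemma is_source_if_nbhd_shrinks: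
  assumes "iterates_shrink g K" "K \<subseteq> X" and nbhd: "\<exists>\<^sub>F n in sequentially. nbhd_in X ((g ^^ n) ` K) x"
  shows "is_source X g x"
  unfolding is_source_def
proof
  show "\<forall>\<epsilon>>0. nbhd_in X (Wu_eps X g \<epsilon> x) x"
  proof (intro allI impI)
    fix \<epsilon> :: real assume "\<epsilon> > 0"
    obtain M where M: "\<And>n y. M \<le> n \<Longrightarrow> y \<in> (g ^^ n) ` K \<Longrightarrow> (g ^^ n) ` K \<subseteq> Wu_eps X g \<epsilon> y"
      by (rule funpow_image_subset_Wu_eps[OF assms(1,2) \<open>\<epsilon> > 0\<close>]) blast
    obtain n where "n \<ge> M" and n: "nbhd_in X ((g ^^ n) ` K) x"
      using nbhd unfolding frequently_sequentially by blast
    have "x \<in> (g ^^ n) ` K" using n unfolding nbhd_in_def by blast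
    then have "(g ^^ n) ` K \<subseteq> Wu_eps X g \<epsilon> x" by (rule M[OF \<open>n \<ge> M\<close>])
    with n show "nbhd_in X (Wu_eps X g \<epsilon> x) x" unfolding nbhd_in_def by (meson order.trans)
  qed
  obtain n U where U: "openin (top_of_set X) U" "x \<in> U" "U \<subseteq> (g ^^ n) ` K"
    using frequently_ex[OF nbhd] unfolding nbhd_in_def by blast
  then obtain \<rho> where "\<rho> > 0" and \<rho>: "ball x \<rho> \<inter> X \<subseteq> U"
    unfolding openin_contains_ball by blast
  have "Wu_eps X g (\<rho> / 2) x \<subseteq> U"
  proof
    fix w assume "w \<in> Wu_eps X g (\<rho> / 2) x"
    then have "w \<in> X" "dist ((g ^^ 0) x) ((g ^^ 0) w) \<le> \<rho> / 2" unfolding Wu_eps_def by blast+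
    then show "w \<in> U" using \<rho> \<open>\<rho> > 0\<close> by auto
  qed
  also have "\<dots> \<subseteq> Wu X g x"
    using U funpow_image_subset_Wu[OF assms(1,2)] by blast
  finally show "\<exists>\<epsilon>>0. Wu_eps X g \<epsilon> x \<subseteq> Wu X g x" using \<open>\<rho> > 0\<close> by (intro exI[of _ "\<rho> / 2"]) auto
qed

lemma return_time:
  assumes K: "K \<subseteq> X" "iterates_shrink g K" and U: "openin (top_of_set X) U" "z \<in> U" "U \<subseteq> K"
    and x: "x \<in> X" "z \<in> omega_limit f x"
  obtains m where "m > 0" "(g ^^ m) ` K \<subseteq> K"
proof -
  obtain \<rho> where "\<rho> > 0" and \<rho>: "ball z \<rho> \<inter> X \<subseteq> U"
    using U(1,2) unfolding openin_contains_ball by blast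
  obtain M where M: "\<And>s u v. M \<le> s \<Longrightarrow> u \<in> K \<Longrightarrow> v \<in> K \<Longrightarrow> dist ((g ^^ s) u) ((g ^^ s) v) < \<rho> / 2"
    using K(2) \<open>\<rho> > 0\<close> unfolding iterates_shrink_def by (meson half_gt_zero)
  have near: "\<exists>\<^sub>F n in sequentially. dist ((f ^^ n) x) z < \<rho> / 2"
    using \<open>\<rho> > 0\<close> by (intro omega_limit_frequently[OF x(2)])
      (auto simp: eventually_nhds_metric intro!: exI[of _ "\<rho> / 2"])
  obtain a where a: "dist ((f ^^ a) x) z < \<rho> / 2" using near by (rule frequentlyE)
  obtain b where "b \<ge> a + M + 1" and b: "dist ((f ^^ b) x) z < \<rho> / 2"
    using near unfolding frequently_sequentially by blast
  define m where "m = b - a"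
  have "m > 0" "M \<le> m" using \<open>b \<ge> a + M + 1\<close> by (auto simp: m_def)
  have "dist z ((f ^^ b) x) < \<rho>"
    using b zero_le_dist[of z "(f ^^ b) x"] dist_commute[of z "(f ^^ b) x"] by linarith
  then have "(f ^^ b) x \<in> ball z \<rho> \<inter> X" using x(1) by simp
  then have "(f ^^ b) x \<in> K" using \<rho> U(3) by blast
  have "(g ^^ m) ((f ^^ b) x) = (f ^^ a) x"
    using homeomorphism_funpow_diff[OF homeomorphism x(1), of m b] \<open>b \<ge> a + M + 1\<close>
    by (simp add: m_def)
  \<comment> \<open>\<open>g\<^sup>m K\<close> is \<open>\<rho>/2\<close>-small and contains \<open>g\<^sup>m (f\<^sup>b x) = f\<^sup>a x\<close>, which is \<open>\<rho>/2\<close>-close to \<open>z\<close>.\<close>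
  have "(g ^^ m) u \<in> K" if "u \<in> K" for u
  proof -
    have "dist ((g ^^ m) u) ((f ^^ a) x) < \<rho> / 2"
      using M[OF \<open>M \<le> m\<close> that \<open>(f ^^ b) x \<in> K\<close>] \<open>(g ^^ m) ((f ^^ b) x) = (f ^^ a) x\<close> by simp
    then have "dist z ((g ^^ m) u) < \<rho>"
      using a dist_triangle[of z "(g ^^ m) u" "(f ^^ a) x"] by (simp add: dist_commute)
    moreover have "(g ^^ m) u \<in> X" using K(1) that by auto
    ultimately show ?thesis using \<rho> U(3) by auto
  qed
  then show thesis using \<open>m > 0\<close> by (intro that) auto
qed

lemma periodic_if_returns:
  assumes "iterates_shrink g K" "K \<subseteq> X" "(g ^^ m) ` K \<subseteq> K" "x \<in> X"
    and returns: "\<exists>\<^sub>F n in sequentially. (f ^^ n) x \<in> K"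
  shows "(f ^^ m) x = x"
proof -
  have "dist x ((g ^^ m) x) < \<gamma>" if "\<gamma> > 0" for \<gamma>
  proof -
    obtain M where M: "\<forall>s\<ge>M. \<forall>u\<in>K. \<forall>v\<in>K. dist ((g ^^ s) u) ((g ^^ s) v) < \<gamma>"
      using assms(1) \<open>\<gamma> > 0\<close> unfolding iterates_shrink_def by blast
    obtain n where "n \<ge> M" and y: "(f ^^ n) x \<in> K"
      using returns unfolding frequently_sequentially by blast
    have "x = (g ^^ n) ((f ^^ n) x)" using assms(4) by simp
    moreover have "(g ^^ m) ((g ^^ n) u) = (g ^^ n) ((g ^^ m) u)" for u
      by (metis add.commute comp_apply funpow_add)
    ultimately have "dist x ((g ^^ m) x) = dist ((g ^^ n) ((f ^^ n) x)) ((g ^^ n) ((g ^^ m) ((f ^^ n) x)))"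
      by metis
    also have "\<dots> < \<gamma>" using M \<open>n \<ge> M\<close> y assms(3) by blast
    finally show ?thesis .
  qed
  then have "(g ^^ m) x = x" by (metis dist_pos_lt less_irrefl)
  then show ?thesis using funpow_inv_cancel(2)[OF assms(4), of m] by simp
qed

lemma periodic_source_if_shadowed:
  assumes scale: "uniform_cw_scale X f g (2 * e)"
    and K: "K \<subseteq> X" "connected K" and U: "openin (top_of_set X) U" "z \<in> U" "U \<subseteq> K"
    and x: "x \<in> X" "z \<in> omega_limit f x"
    and shadowed: "\<exists>\<^sub>F n in sequentially. (f ^^ n) x \<in> U \<and> (g ^^ n) ` K \<subseteq> bowen_ball X f n e x"
  shows "is_periodic f x \<and> is_source X g x"
proof -
  have "\<exists>\<^sub>F n in sequentially. (g ^^ n) ` K \<subseteq> bowen_ball X f n e x"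
    using shadowed by (rule frequently_elim1) simp
  then have shrink: "iterates_shrink g K"
    by (intro iterates_shrink_if_bounded[OF scale K] backward_dist_le_if_shadowed[OF _ K(1)])
  have returns: "\<exists>\<^sub>F n in sequentially. (f ^^ n) x \<in> U"
    using shadowed by (rule frequently_elim1) simp
  obtain m where "m > 0" "(g ^^ m) ` K \<subseteq> K"
    by (rule return_time[OF K(1) shrink U x]) blast
  moreover have "(f ^^ m) x = x"
    using returns U(3)
    by (intro periodic_if_returns[OF shrink K(1) \<open>(g ^^ m) ` K \<subseteq> K\<close> x(1)]) (auto elim: frequently_elim1)
  ultimately have "is_periodic f x" by (auto simp: is_periodic_def)
  moreover have "\<exists>\<^sub>F n in sequentially. nbhd_in X ((g ^^ n) ` K) x"
    using returns by (rule frequently_elim1) (rule nbhd_in_funpow_image[OF U(1,3) x(1)])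
  then have "is_source X g x" by (rule is_source_if_nbhd_shrinks[OF shrink K(1)])
  ultimately show ?thesis ..
qed

lemma periodic_source_or_diameter_ge:
  assumes scale: "uniform_cw_scale X f g (2 * e)"
    and N: "\<forall>C. C \<subseteq> X \<longrightarrow> connected C \<longrightarrow> orbit_close f g N (2 * e) C \<longrightarrow> (\<forall>u\<in>C. \<forall>v\<in>C. dist u v < e)"
    and \<delta>: "\<And>i u v. i \<le> N \<Longrightarrow> u \<in> X \<Longrightarrow> v \<in> X \<Longrightarrow> dist u v < \<delta> \<Longrightarrow> dist ((f ^^ i) u) ((f ^^ i) v) < e"
    and \<eta>: "\<And>j u v. j \<le> N \<Longrightarrow> u \<in> X \<Longrightarrow> v \<in> X \<Longrightarrow> dist u v < \<eta> \<Longrightarrow> dist ((g ^^ j) u) ((g ^^ j) v) < e"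
    and "0 < e" "e \<le> \<epsilon>" "\<eta> > 0"
    and x: "x \<in> X" "z \<in> omega_limit f x" "locally_connected_at X z"
  shows "(is_periodic f x \<and> is_source X g x) \<or> \<delta> \<le> diameter (CWs X f \<epsilon> x)"
proof -
  obtain K U where K: "compact K" "connected K" "K \<subseteq> X" "\<And>u v. u \<in> K \<Longrightarrow> v \<in> K \<Longrightarrow> dist u v < \<eta>"
    and U: "openin (top_of_set X) U" "z \<in> U" "U \<subseteq> K"
    using x(2) omega_limit_subset[OF x(1)]
    by (rule_tac locally_connected_at_continuum[OF compact_X _ x(3) \<open>\<eta> > 0\<close>]) blast+
  have K_small: "dist ((g ^^ j) u) ((g ^^ j) v) < e" if "j \<le> N" "u \<in> K" "v \<in> K" for j u v
    using \<eta>[OF that(1) _ _ K(4)[OF that(2,3)]] that(2,3) K(3) by blast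
  let ?shadowed = "\<lambda>n. (g ^^ n) ` K \<subseteq> bowen_ball X f n e x"
  have "\<exists>\<^sub>F n in sequentially. ((f ^^ n) x \<in> U \<and> ?shadowed n) \<or> ((f ^^ n) x \<in> U \<and> \<not> ?shadowed n)"
    using omega_limit_returns[OF x(2,1) U(1,2)] by (rule frequently_elim1) simp
  then consider
      "\<exists>\<^sub>F n in sequentially. (f ^^ n) x \<in> U \<and> ?shadowed n"
    | "\<exists>\<^sub>F n in sequentially. (f ^^ n) x \<in> U \<and> \<not> ?shadowed n"
    unfolding frequently_disj_iff by blast
  then show ?thesis
  proof cases
    case 1
    then show ?thesis using periodic_source_if_shadowed[OF scale K(3,2) U x(1,2)] by blast
  next
    case 2
    then have "\<exists>\<^sub>F n in sequentially. (f ^^ n) x \<in> K \<and> \<not> ?shadowed n"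
      by (rule frequently_elim1) (use U(3) in blast)
    then show ?thesis
      using diameter_CWs_ge_if_escaping[OF N \<delta> K(1-3) K_small x(1) \<open>0 < e\<close> \<open>e \<le> \<epsilon>\<close>] by blast
  qed
qed

end

theorem mainTheorem9:
  fixes X :: "'a::metric_space set" and f g :: "'a \<Rightarrow> 'a"
  assumes "compact X" and "homeomorphism X X f g" and "cw_expansive X f g"
  shows "\<forall>\<epsilon>>0. \<exists>\<delta>>0. \<forall>x\<in>X. (\<exists>z\<in>omega_limit f x. locally_connected_at X z) \<longrightarrow>
           ((is_periodic f x \<and> is_source X g x) \<or> diameter (CWs X f \<epsilon> x) \<ge> \<delta>)"
proof (intro allI impI)
  interpret compact_dynamics X f g by (rule compact_dynamics.intro[OF assms(1,2)])
  fix \<epsilon> :: real assume "\<epsilon> > 0"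
  obtain r0 where "r0 > 0" and scale: "\<And>r. r \<le> r0 \<Longrightarrow> uniform_cw_scale X f g r"
    by (rule cw_expansive_imp_uniform_cw_scale[OF assms(3)]) blast
  define e where "e = min \<epsilon> (r0 / 2)"
  have e: "0 < e" "e \<le> \<epsilon>" "uniform_cw_scale X f g (2 * e)"
    using \<open>\<epsilon> > 0\<close> \<open>r0 > 0\<close> scale by (auto simp: e_def)
  then obtain N where N: "\<forall>C. C \<subseteq> X \<longrightarrow> connected C \<longrightarrow> orbit_close f g N (2 * e) C \<longrightarrow> (\<forall>u\<in>C. \<forall>v\<in>C. dist u v < e)"
    unfolding uniform_cw_scale_def by blast
  obtain \<delta> where "\<delta> > 0"
    and \<delta>: "\<And>i u v. i \<le> N \<Longrightarrow> u \<in> X \<Longrightarrow> v \<in> X \<Longrightarrow> dist u v < \<delta> \<Longrightarrow> dist ((f ^^ i) u) ((f ^^ i) v) < e"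
    by (rule uniformly_continuous_on_finite_family[where F = "\<lambda>i. f ^^ i", OF compact_X
          continuous_on_funpow(1) e(1)]) blast
  obtain \<eta> where "\<eta> > 0"
    and \<eta>: "\<And>j u v. j \<le> N \<Longrightarrow> u \<in> X \<Longrightarrow> v \<in> X \<Longrightarrow> dist u v < \<eta> \<Longrightarrow> dist ((g ^^ j) u) ((g ^^ j) v) < e"
    by (rule uniformly_continuous_on_finite_family[where F = "\<lambda>i. g ^^ i", OF compact_X
          continuous_on_funpow(2) e(1)]) blast
  have "(is_periodic f x \<and> is_source X g x) \<or> \<delta> \<le> diameter (CWs X f \<epsilon> x)"
    if "x \<in> X" "z \<in> omega_limit f x" "locally_connected_at X z" for x z
    by (rule periodic_source_or_diameter_ge[OF e(3) N \<delta> \<eta> e(1,2) \<open>\<eta> > 0\<close> that])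
  then show "\<exists>\<delta>>0. \<forall>x\<in>X. (\<exists>z\<in>omega_limit f x. locally_connected_at X z) \<longrightarrow>
      ((is_periodic f x \<and> is_source X g x) \<or> diameter (CWs X f \<epsilon> x) \<ge> \<delta>)"
    using \<open>\<delta> > 0\<close> by blast
qed

end
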